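(* For positive integers $m,M$ let $$S_M(m)=\sum_{r=0}^M\left(-\frac14\right)^r\frac{(2m+2r-1)!}{r!\,(m+r-1)!}\binom{m-1+M}{m-1+r}.$$ Then $$S_M(1)=\frac{(2\cdot1-3)(2\cdot2-3)\cdots(2M-3)}{M!\,2^M},\qquad S_M(m)=\frac{(2m-1)!}{(m-1)!}S_M(1),$$ and in particular $S_M(m)\neq0$ for all positive integers $m,M$. *)

theory Defs
  imports Complex_Main
begin

definition S :: "nat \<Rightarrow> nat \<Rightarrow> real" where
  "S M m = (\<Sum>r=0..M. (- 1 / 4) ^ r * fact (2*m + 2*r - 1) / (fact r * fact (m + r - 1))
              * real ((m - 1 + M) choose (m - 1 + r)))"

end

theory Submission
  imports Defs
begin

text \<open>
  Put \<open>n = m - 1\<close>. The summands of \<open>S M (n + 1)\<close> are hypergeometric in both \<open>M\<close> and \<open>r\<close>,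
  and a Zeilberger-style certificate makes the differences
  \<open>(2M + 2) S (M + 1) (n + 1) - (2M - 1) S M (n + 1)\<close> telescope to zero. Thus \<open>S M (n + 1)\<close>
  satisfies a first-order recurrence in \<open>M\<close> whose coefficients do not involve \<open>n\<close>, so it is its
  initial value \<open>(2n + 1)! / n!\<close> times the solution \<open>\<Prod>k=1..M. (2k - 3) / (M! 2^M)\<close>. No factor
  \<open>2k - 3\<close> vanishes, being odd.
\<close>

lemma of_nat_binomial_Suc_ratio:
  "(of_nat k + 1) * of_nat (N choose Suc k) = (of_nat N - of_nat k) * (of_nat (N choose k) :: 'a::field_char_0)"
  using gbinomial_absorption[of k "of_nat N :: 'a"] gbinomial_absorb_comp[of "of_nat N :: 'a" k]
  by (simp add: binomial_gbinomial add.commute)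

text \<open>Indexed by \<open>n = m - 1\<close>, so that no natural subtraction occurs.\<close>
definition S_coeff :: "nat \<Rightarrow> nat \<Rightarrow> real" where
  "S_coeff n r = (- 1 / 4) ^ r * fact (2*n + 2*r + 1) / (fact r * fact (n + r))"

lemma S_coeff_Suc:
  "2 * (real r + 1) * S_coeff n (Suc r) = - (2 * real n + 2 * real r + 3) * S_coeff n r"
proof -
  define A :: real where "A = fact (2*n + 2*r + 1)"
  define B :: real where "B = fact r * fact (n + r)"
  define a :: real where "a = real r + 1"
  define b :: real where "b = real n + real r + 1"
  have "2*n + 2 * Suc r + 1 = Suc (Suc (2*n + 2*r + 1))" by simp
  then have num: "fact (2*n + 2 * Suc r + 1) = (2 * b + 1) * (2 * b) * A"
    unfolding A_def b_def by (simp add: algebra_simps)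
  have den: "fact (Suc r) * fact (n + Suc r) = a * b * B"
    unfolding B_def a_def b_def by (simp add: algebra_simps)
  have factors: "2 * real n + 2 * real r + 3 = 2 * b + 1" "2 * (real r + 1) = 2 * a"
    unfolding a_def b_def by simp_all
  have "a > 0" "b > 0" "B > 0"
    unfolding a_def b_def B_def by auto
  then show ?thesis
    unfolding S_coeff_def num den power_Suc factors A_def[symmetric] B_def[symmetric]
    by (simp add: field_simps)
qed

definition S_summand :: "nat \<Rightarrow> nat \<Rightarrow> nat \<Rightarrow> real" where
  "S_summand n M r = S_coeff n r * real (n + M choose n + r)"

lemma S_Suc_eq_sum: "S M (Suc n) = (\<Sum>r<Suc M. S_summand n M r)"
  unfolding S_def S_summand_def S_coeff_def
  by (intro sum.cong) (auto simp: atLeast0AtMost lessThan_Suc_atMost)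

definition S_certificate :: "nat \<Rightarrow> nat \<Rightarrow> nat \<Rightarrow> real" where
  "S_certificate n M r =
     (case r of 0 \<Rightarrow> 0 | Suc s \<Rightarrow> (2 * real n + 2 * real s + 3) * S_summand n M s)"

lemma S_summand_telescoping:
  "(2 * real M + 2) * S_summand n (Suc M) r - (2 * real M - 1) * S_summand n M r
     = S_certificate n M (Suc r) - S_certificate n M r"
proof (cases r)
  case 0
  have "Suc M * (Suc (n + M) choose n) = Suc (n + M) * (n + M choose n)"
    using binomial_absorb_comp[of "Suc (n + M)" n] by (simp add: Suc_diff_le)
  then have "real (Suc M) * real (Suc (n + M) choose n) = real (Suc (n + M)) * real (n + M choose n)"
    by (metis of_nat_mult)
  then show ?thesis
    unfolding 0 S_summand_def S_certificate_def by simp algebra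
next
  case (Suc s)
  let ?C = "\<lambda>k. real (n + M choose k)"
  have ratio: "(real n + real s + 1) * ?C (Suc (n + s)) = (real M - real s) * ?C (n + s)"
    using of_nat_binomial_Suc_ratio[of "n + s" "n + M"] by (simp add: algebra_simps)
  show ?thesis
    using ratio S_coeff_Suc[of s n] unfolding Suc S_summand_def S_certificate_def by simp algebra
qed

lemma S_recurrence:
  "(2 * real M + 2) * S (Suc M) (Suc n) = (2 * real M - 1) * S M (Suc n)"
proof -
  have "S M (Suc n) = (\<Sum>r<Suc (Suc M). S_summand n M r)"
    by (simp add: S_Suc_eq_sum S_summand_def)
  then have "(2 * real M + 2) * S (Suc M) (Suc n) - (2 * real M - 1) * S M (Suc n)
      = (\<Sum>r<Suc (Suc M). (2 * real M + 2) * S_summand n (Suc M) r - (2 * real M - 1) * S_summand n M r)"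
    by (simp only: S_Suc_eq_sum[of "Suc M"] sum_distrib_left sum_subtractf)
  also have "\<dots> = (\<Sum>r<Suc (Suc M). S_certificate n M (Suc r) - S_certificate n M r)"
    by (simp only: S_summand_telescoping)
  also have "\<dots> = S_certificate n M (Suc (Suc M)) - S_certificate n M 0"
    by (rule sum_lessThan_telescope)
  also have "\<dots> = 0"
    by (simp add: S_certificate_def S_summand_def)
  finally show ?thesis
    by simp
qed

lemma solve_recurrence:
  fixes a :: "nat \<Rightarrow> real"
  assumes "\<And>M. (2 * real M + 2) * a (Suc M) = (2 * real M - 1) * a M"
  shows "a M = a 0 * (\<Prod>k=1..M. 2 * real k - 3) / (fact M * 2 ^ M)"
proof (induction M)
  case 0
  show ?case by simp
next
  case (Suc M)
  have "a (Suc M) = (2 * real M - 1) * a M / (2 * real M + 2)"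
    using assms[of M] by (simp add: field_simps)
  also have "\<dots> = a 0 * ((\<Prod>k=1..M. 2 * real k - 3) * (2 * real M - 1)) / (fact M * 2 ^ M * (2 * real M + 2))"
    unfolding Suc by (simp add: field_simps)
  also have "\<dots> = a 0 * (\<Prod>k=1..Suc M. 2 * real k - 3) / (fact (Suc M) * 2 ^ Suc M)"
    by (simp add: prod.cl_ivl_Suc algebra_simps)
  finally show ?case .
qed

theorem lemma5:
  fixes m M :: nat
  assumes "m \<ge> 1" and "M \<ge> 1"
  shows "S M 1 = (\<Prod>k=1..M. 2 * real k - 3) / (fact M * 2 ^ M)
         \<and> S M m = fact (2*m - 1) / fact (m - 1) * S M 1
         \<and> S M m \<noteq> 0"
proof -
  define P where "P = (\<Prod>k=1..M. 2 * real k - 3) / (fact M * 2 ^ M)"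
  have closed_form: "S M (Suc n) = fact (2*n + 1) / fact n * P" for n
    using solve_recurrence[of "\<lambda>M. S M (Suc n)", OF S_recurrence]
    by (simp add: P_def S_Suc_eq_sum S_summand_def S_coeff_def)
  have "2 * real k - 3 \<noteq> 0" for k
  proof
    assume "2 * real k - 3 = 0"
    then have "real (2 * k) = real 3" by simp
    then show False by (simp only: of_nat_eq_iff) presburger
  qed
  then have "P \<noteq> 0"
    by (simp add: P_def)
  moreover obtain n where "m = Suc n"
    using assms(1) by (cases m) auto
  ultimately show ?thesis
    using closed_form[of n] closed_form[of 0] by (simp add: P_def)
qed

end
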